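(* Let $P_X$ and an $M$-type distribution $P_{\hat X}$ be defined on the same discrete alphabet $\mathcal{X}$. Then for every $\gamma>0$ and $a>0$, $$E_\gamma(P_{\hat X}\|P_X)\ge1-\gamma\,\mathbb{P}\big[\imath_X(X)<\log(\gamma M)+a\big]-\exp(-a),$$ where $X\sim P_X$.
   Context: A distribution on a discrete set is an $M$-type if all its probabilities are integer multiples of $1/M$. $\imath_X(x):=\log\frac1{P_X(x)}$. $E_\gamma(P\|Q):=\sup_{\mathcal{A}}\{P(\mathcal{A})-\gamma Q(\mathcal{A})\}$. *)

theory Defs
  imports "HOL-Probability.Probability"
begin

definition M_type :: "nat \<Rightarrow> 'a pmf \<Rightarrow> bool" where
  "M_type M P \<longleftrightarrow> (\<forall>x. \<exists>k::nat. pmf P x = real k / real M)"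

definition info_dens :: "'a pmf \<Rightarrow> 'a \<Rightarrow> real" where
  "info_dens P x = ln (1 / pmf P x)"

definition E_gamma :: "real \<Rightarrow> 'a pmf \<Rightarrow> 'a pmf \<Rightarrow> real" where
  "E_gamma \<gamma> P Q = (SUP A. measure_pmf.prob P A - \<gamma> * measure_pmf.prob Q A)"

end

theory Submission
  imports Defs
begin

text \<open>Take the event A = supp P_Xhat, which has P_Xhat-probability 1 and at most M points, since
  every atom of an M-type has mass at least 1/M. Split A according to whether the information
  density of P_X is below c = log (gamma M) + a: points where it is at least c carry P_X-mass at
  most exp (-c) each, so together at most M exp (-c) = exp (-a) / gamma. Hence
  gamma P_X(A) \<le> gamma P[i(X) < c] + exp (-a), and E_gamma dominates 1 - gamma P_X(A).\<close>

lemma M_type_pmf_ge: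
  assumes "M > 0" "M_type M P" "x \<in> set_pmf P"
  shows "pmf P x \<ge> 1 / real M"
proof -
  obtain k :: nat where k: "pmf P x = real k / real M"
    using assms(2) unfolding M_type_def by blast
  have "pmf P x > 0" using assms(3) by (simp add: pmf_positive)
  hence "k \<ge> 1" using k by (cases k) auto
  thus ?thesis using k assms(1) by (simp add: divide_right_mono)
qed

lemma M_type_card_le:
  assumes "M > 0" "M_type M P" "finite B" "B \<subseteq> set_pmf P"
  shows "card B \<le> M"
proof -
  have "real (card B) / real M = (\<Sum>x\<in>B. 1 / real M)" by simp
  also have "\<dots> \<le> (\<Sum>x\<in>B. pmf P x)"
    using assms M_type_pmf_ge[OF assms(1,2)] by (intro sum_mono) auto
  also have "\<dots> = measure_pmf.prob P B" using assms(3) by (simp add: measure_measure_pmf_finite)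
  also have "\<dots> \<le> 1" by simp
  finally show ?thesis using assms(1) by (simp add: divide_le_eq)
qed

lemma M_type_finite_support:
  assumes "M > 0" "M_type M P"
  shows "finite (set_pmf P)"
proof (rule ccontr)
  assume "infinite (set_pmf P)"
  then obtain B where "B \<subseteq> set_pmf P" "finite B" "card B = Suc M"
    using infinite_arbitrarily_large by blast
  thus False using M_type_card_le[OF assms] by fastforce
qed

lemma M_type_card_support:
  assumes "M > 0" "M_type M P"
  shows "card (set_pmf P) \<le> M"
  using M_type_card_le[OF assms M_type_finite_support[OF assms]] by simp

lemma pmf_le_exp_if_info_dens_ge:
  assumes "info_dens P x \<ge> c"
  shows "pmf P x \<le> exp (- c)"
proof (cases "pmf P x > 0")
  case True
  have "c \<le> - ln (pmf P x)" using assms True by (simp add: info_dens_def ln_div)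
  hence "exp (ln (pmf P x)) \<le> exp (- c)" by simp
  thus ?thesis using True by simp
next
  case False
  thus ?thesis using pmf_nonneg[of P x] by (smt (verit) exp_gt_zero)
qed

lemma prob_le_info_dens_tail:
  assumes "finite A"
  shows "measure_pmf.prob P A \<le>
    measure_pmf.prob P {x. info_dens P x < c} + real (card A) * exp (- c)"
proof -
  define T where "T = A \<inter> {x. info_dens P x \<ge> c}"
  have "finite T" using assms by (simp add: T_def)
  have "measure_pmf.prob P T = (\<Sum>x\<in>T. pmf P x)"
    using \<open>finite T\<close> by (simp add: measure_measure_pmf_finite)
  also have "\<dots> \<le> (\<Sum>x\<in>T. exp (- c))"
    by (intro sum_mono) (simp add: T_def pmf_le_exp_if_info_dens_ge)
  also have "\<dots> \<le> real (card A) * exp (- c)"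
    using card_mono[OF assms, of T] by (simp add: T_def)
  finally have PT: "measure_pmf.prob P T \<le> real (card A) * exp (- c)" .
  have "measure_pmf.prob P A \<le> measure_pmf.prob P ({x. info_dens P x < c} \<union> T)"
    by (intro measure_pmf.finite_measure_mono) (auto simp: T_def)
  also have "\<dots> \<le> measure_pmf.prob P {x. info_dens P x < c} + measure_pmf.prob P T"
    by (intro measure_subadditive) (auto simp: measure_pmf.emeasure_finite)
  finally show ?thesis using PT by simp
qed

lemma E_gamma_ge_event:
  assumes "\<gamma> \<ge> 0"
  shows "measure_pmf.prob P A - \<gamma> * measure_pmf.prob Q A \<le> E_gamma \<gamma> P Q"
proof -
  have bdd: "bdd_above (range (\<lambda>A. measure_pmf.prob P A - \<gamma> * measure_pmf.prob Q A))"
  proof (rule bdd_aboveI2)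
    fix B
    show "measure_pmf.prob P B - \<gamma> * measure_pmf.prob Q B \<le> 1"
      using assms measure_pmf.prob_le_1[of P B] measure_nonneg[of Q B]
      by (smt (verit) mult_nonneg_nonneg)
  qed
  show ?thesis unfolding E_gamma_def by (rule cSUP_upper[OF _ bdd]) simp
qed

theorem mainTheorem6:
  fixes PX PXhat :: "'a pmf" and M :: nat and \<gamma> a :: real
  assumes "M > 0" and "M_type M PXhat" and "\<gamma> > 0" and "a > 0"
  shows "E_gamma \<gamma> PXhat PX \<ge>
    1 - \<gamma> * measure_pmf.prob PX {x. info_dens PX x < ln (\<gamma> * real M) + a} - exp (- a)"
proof -
  define A where "A = set_pmf PXhat"
  define S where "S = {x. info_dens PX x < ln (\<gamma> * real M) + a}"
  have "real (card A) * exp (- (ln (\<gamma> * real M) + a)) \<le> real M * exp (- (ln (\<gamma> * real M) + a))"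
    using M_type_card_support[OF assms(1,2)] by (simp add: A_def)
  also have "\<dots> = exp (- a) / \<gamma>"
    using assms(1,3) by (simp add: exp_diff exp_minus field_simps)
  finally have "measure_pmf.prob PX A \<le> measure_pmf.prob PX S + exp (- a) / \<gamma>"
    using prob_le_info_dens_tail[of A PX "ln (\<gamma> * real M) + a"] M_type_finite_support[OF assms(1,2)]
    unfolding A_def S_def by linarith
  hence "\<gamma> * measure_pmf.prob PX A \<le> \<gamma> * (measure_pmf.prob PX S + exp (- a) / \<gamma>)"
    using assms(3) by (intro mult_left_mono) auto
  also have "\<dots> = \<gamma> * measure_pmf.prob PX S + exp (- a)"
    using assms(3) by (simp add: field_simps)
  finally have "1 - \<gamma> * measure_pmf.prob PX S - exp (- a) \<le> 1 - \<gamma> * measure_pmf.prob PX A"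
    by simp
  also have "\<dots> = measure_pmf.prob PXhat A - \<gamma> * measure_pmf.prob PX A"
    by (simp add: A_def measure_pmf.prob_eq_1 AE_measure_pmf)
  also have "\<dots> \<le> E_gamma \<gamma> PXhat PX"
    using assms(3) by (intro E_gamma_ge_event) simp
  finally show ?thesis unfolding S_def .
qed

end
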